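(* Let $p\in\mathbb{C}[z_1,\dots,z_d]$ have no zeros in $\mathbb{D}^d$ and vanish to order $M$ at $u=(1,\dots,1)$, and let $q\in\mathbb{C}[z_1,\dots,z_d]$, $f=q/p$. Then $f$ is bounded along non-tangential approach regions to $u$ if and only if $q$ vanishes to order at least $M$ at $u$.
   Context: $\mathbb{D}$ is the open unit disk; $RHP=\{\zeta\in\mathbb{C}:\mathrm{Re}\,\zeta>0\}$. A polynomial vanishes to order $M$ at $u$ if the lowest-degree nonzero homogeneous term of $\zeta\mapsto p(u-\zeta)$ has degree $M$. For $\zeta\in RHP^d$ let $D_\zeta=\{|\zeta_1|,\dots,|\zeta_d|,\mathrm{Re}\,\zeta_1,\dots,\mathrm{Re}\,\zeta_d\}$, and for $c>1$ let $AR_c=\{\zeta\in RHP^d: 1/c\le x/y\le c \text{ for all } x,y\in D_\zeta\}$. "$f$ is bounded along non-tangential approach regions to $u$" means: for every $c>1$, $f(u-\zeta)$ is bounded for $\zeta\in AR_c$ with $|\zeta_1|$ sufficiently small. *)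

theory Defs
  imports Complex_Main
begin

text \<open>Points of C^d are functions nat => complex; only coordinates 0..d-1 matter
  (coordinate i corresponds to z_(i+1) of the paper). Multi-indices are nat => nat.\<close>

definition mpoly :: "nat \<Rightarrow> ((nat \<Rightarrow> nat) \<Rightarrow> complex) \<Rightarrow> bool" where
  "mpoly d c \<longleftrightarrow> finite {\<alpha>. c \<alpha> \<noteq> 0} \<and> (\<forall>\<alpha>. c \<alpha> \<noteq> 0 \<longrightarrow> (\<forall>i\<ge>d. \<alpha> i = 0))"

definition mpeval :: "nat \<Rightarrow> ((nat \<Rightarrow> nat) \<Rightarrow> complex) \<Rightarrow> (nat \<Rightarrow> complex) \<Rightarrow> complex" where
  "mpeval d c z = (\<Sum>\<alpha>\<in>{\<alpha>. c \<alpha> \<noteq> 0}. c \<alpha> * (\<Prod>i<d. z i ^ \<alpha> i))"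

definition mdeg :: "nat \<Rightarrow> (nat \<Rightarrow> nat) \<Rightarrow> nat" where
  "mdeg d \<alpha> = (\<Sum>i<d. \<alpha> i)"

definition vanishes_to_order :: "nat \<Rightarrow> ((nat \<Rightarrow> nat) \<Rightarrow> complex) \<Rightarrow> (nat \<Rightarrow> complex) \<Rightarrow> nat \<Rightarrow> bool" where
  "vanishes_to_order d c u M \<longleftrightarrow>
     (\<exists>b. mpoly d b \<and> (\<forall>\<zeta>. mpeval d c (\<lambda>i. u i - \<zeta> i) = mpeval d b \<zeta>)
          \<and> (\<forall>\<beta>. mdeg d \<beta> < M \<longrightarrow> b \<beta> = 0) \<and> (\<exists>\<beta>. mdeg d \<beta> = M \<and> b \<beta> \<noteq> 0))"

text \<open>Vanishes to order at least M (every homogeneous term of degree < M is zero;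
  this includes the zero polynomial).\<close>
definition vanishes_to_order_ge :: "nat \<Rightarrow> ((nat \<Rightarrow> nat) \<Rightarrow> complex) \<Rightarrow> (nat \<Rightarrow> complex) \<Rightarrow> nat \<Rightarrow> bool" where
  "vanishes_to_order_ge d c u M \<longleftrightarrow>
     (\<exists>b. mpoly d b \<and> (\<forall>\<zeta>. mpeval d c (\<lambda>i. u i - \<zeta> i) = mpeval d b \<zeta>)
          \<and> (\<forall>\<beta>. mdeg d \<beta> < M \<longrightarrow> b \<beta> = 0))"

definition polydisc :: "nat \<Rightarrow> (nat \<Rightarrow> complex) set" where
  "polydisc d = {z. \<forall>i<d. cmod (z i) < 1}"

definition Dset :: "nat \<Rightarrow> (nat \<Rightarrow> complex) \<Rightarrow> real set" where
  "Dset d \<zeta> = (\<lambda>i. cmod (\<zeta> i)) ` {..<d} \<union> (\<lambda>i. Re (\<zeta> i)) ` {..<d}"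

definition AR :: "nat \<Rightarrow> real \<Rightarrow> (nat \<Rightarrow> complex) set" where
  "AR d c = {\<zeta>. (\<forall>i<d. 0 < Re (\<zeta> i)) \<and>
                 (\<forall>x\<in>Dset d \<zeta>. \<forall>y\<in>Dset d \<zeta>. 1 / c \<le> x / y \<and> x / y \<le> c)}"

definition nt_bounded :: "nat \<Rightarrow> ((nat \<Rightarrow> complex) \<Rightarrow> complex) \<Rightarrow> (nat \<Rightarrow> complex) \<Rightarrow> bool" where
  "nt_bounded d f u \<longleftrightarrow>
     (\<forall>c>1. \<exists>\<delta>>0. \<exists>B. \<forall>\<zeta>\<in>AR d c. cmod (\<zeta> 0) < \<delta> \<longrightarrow> cmod (f (\<lambda>i. u i - \<zeta> i)) \<le> B)"

end

theory Submission
  imports Defs "HOL-Complex_Analysis.Complex_Analysis"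
begin

text \<open>Write \<open>p(1 - \<zeta>) = P\<^sub>M(\<zeta>) + O(|\<zeta>|\<^sup>M\<^sup>+\<^sup>1)\<close>, where \<open>P\<^sub>M\<close> is the homogeneous part of
  degree \<open>M\<close>, and let \<open>Q\<^sub>k\<close> be the lowest-degree homogeneous part of \<open>q(1 - \<zeta>)\<close>.
  For \<open>Re \<zeta> > 0\<close> and small \<open>\<tau> > 0\<close> the point \<open>1 - \<tau>\<zeta>\<close> lies in the polydisc, so the
  functions \<open>p(1 - \<tau>\<zeta>)/\<tau>\<^sup>M\<close> are zero-free there and converge locally uniformly to
  \<open>P\<^sub>M(\<zeta>)\<close>; by Hurwitz's theorem \<open>P\<^sub>M\<close> has no zeros in the right half-polyplane.
  A point of \<open>AR\<^sub>c\<close> is \<open>\<zeta> = t w\<close> with \<open>t = |\<zeta>\<^sub>1|\<close> and \<open>w\<close> in a compact subset of the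
  right half-polyplane, where \<open>|P\<^sub>M|\<close> is bounded below; hence \<open>|p(1 - \<zeta>)| \<ge> m t\<^sup>M\<close> while
  \<open>|q(1 - \<zeta>)| \<le> C t\<^sup>k\<close>, and \<open>q/p\<close> is bounded when \<open>k \<ge> M\<close>. When \<open>k < M\<close>, a Kronecker
  substitution gives \<open>w\<close> with \<open>Re w > 0\<close> and \<open>Q\<^sub>k(w) \<noteq> 0\<close>; the ray \<open>t w\<close> lies in some
  \<open>AR\<^sub>c\<close>, and along it \<open>|q/p|\<close> grows like \<open>t\<^sup>k\<^sup>-\<^sup>M\<close>.\<close>

definition mmon :: "nat \<Rightarrow> (nat \<Rightarrow> nat) \<Rightarrow> (nat \<Rightarrow> complex) \<Rightarrow> complex" where
  "mmon d \<alpha> z = (\<Prod>i<d. z i ^ \<alpha> i)"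

lemma mpeval_mmon: "mpeval d c z = (\<Sum>\<alpha>\<in>{\<alpha>. c \<alpha> \<noteq> 0}. c \<alpha> * mmon d \<alpha> z)"
  by (simp add: mpeval_def mmon_def)

lemma mpeval_superset:
  assumes "finite T" "{\<alpha>. c \<alpha> \<noteq> 0} \<subseteq> T"
  shows "mpeval d c z = (\<Sum>\<alpha>\<in>T. c \<alpha> * mmon d \<alpha> z)"
  unfolding mpeval_mmon by (rule sum.mono_neutral_left) (use assms in auto)

lemma mpeval_cong:
  assumes "\<And>i. i < d \<Longrightarrow> z i = z' i"
  shows "mpeval d c z = mpeval d c z'"
  unfolding mpeval_def using assms by (intro sum.cong prod.cong) auto

lemma mpoly_finite_support: "mpoly d c \<Longrightarrow> finite {\<alpha>. c \<alpha> \<noteq> 0}"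
  by (simp add: mpoly_def)

lemma mpeval_add:
  assumes "finite {\<alpha>. b1 \<alpha> \<noteq> 0}" "finite {\<alpha>. b2 \<alpha> \<noteq> 0}"
  shows "mpeval d (\<lambda>\<alpha>. b1 \<alpha> + b2 \<alpha>) z = mpeval d b1 z + mpeval d b2 z"
proof -
  let ?T = "{\<alpha>. b1 \<alpha> \<noteq> 0} \<union> {\<alpha>. b2 \<alpha> \<noteq> 0}"
  have fin: "finite ?T" using assms by simp
  have "mpeval d (\<lambda>\<alpha>. b1 \<alpha> + b2 \<alpha>) z = (\<Sum>\<alpha>\<in>?T. (b1 \<alpha> + b2 \<alpha>) * mmon d \<alpha> z)"
    by (rule mpeval_superset[OF fin]) auto
  moreover have "mpeval d b1 z = (\<Sum>\<alpha>\<in>?T. b1 \<alpha> * mmon d \<alpha> z)"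
    by (rule mpeval_superset[OF fin]) auto
  moreover have "mpeval d b2 z = (\<Sum>\<alpha>\<in>?T. b2 \<alpha> * mmon d \<alpha> z)"
    by (rule mpeval_superset[OF fin]) auto
  ultimately show ?thesis by (simp add: sum.distrib distrib_right)
qed

lemma mpeval_scale: "mpeval d (\<lambda>\<alpha>. k * b \<alpha>) z = k * mpeval d b z"
proof (cases "k = 0")
  case False
  then have "{\<alpha>. k * b \<alpha> \<noteq> 0} = {\<alpha>. b \<alpha> \<noteq> 0}" by auto
  then show ?thesis unfolding mpeval_mmon by (simp add: sum_distrib_left mult.assoc)
qed (simp add: mpeval_def)

lemma mpoly_add:
  assumes "mpoly d b1" "mpoly d b2" shows "mpoly d (\<lambda>\<alpha>. b1 \<alpha> + b2 \<alpha>)"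
  unfolding mpoly_def
proof (intro conjI allI impI)
  show "finite {\<alpha>. b1 \<alpha> + b2 \<alpha> \<noteq> 0}"
    by (rule finite_subset[OF _ finite_UnI[OF mpoly_finite_support[OF assms(1)]
          mpoly_finite_support[OF assms(2)]]]) auto
  fix \<alpha> i assume "b1 \<alpha> + b2 \<alpha> \<noteq> 0" "d \<le> i"
  then show "\<alpha> i = 0" using assms unfolding mpoly_def by (metis add.left_neutral add_0_right)
qed

lemma mpoly_scale:
  assumes "mpoly d b" shows "mpoly d (\<lambda>\<alpha>. k * b \<alpha>)"
  unfolding mpoly_def
proof (intro conjI allI impI)
  show "finite {\<alpha>. k * b \<alpha> \<noteq> 0}"
    by (rule finite_subset[OF _ mpoly_finite_support[OF assms]]) auto
  fix \<alpha> i assume "k * b \<alpha> \<noteq> 0" "d \<le> i"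
  then show "\<alpha> i = 0" using assms unfolding mpoly_def by simp
qed

definition mpoly_fun :: "nat \<Rightarrow> ((nat \<Rightarrow> complex) \<Rightarrow> complex) \<Rightarrow> bool" where
  "mpoly_fun d F \<longleftrightarrow> (\<exists>b. mpoly d b \<and> (\<forall>z. F z = mpeval d b z))"

lemma mpoly_fun_const: "mpoly_fun d (\<lambda>z. k)"
proof -
  let ?b = "\<lambda>\<alpha>::nat\<Rightarrow>nat. if \<alpha> = (\<lambda>_. 0) then k else 0"
  have "mpoly d ?b" unfolding mpoly_def
    by (auto intro: finite_subset[of _ "{\<lambda>_. 0}"])
  moreover have "mpeval d ?b z = k" for z
    by (subst mpeval_superset[of "{\<lambda>_. 0}"]) (auto simp: mmon_def)
  ultimately show ?thesis unfolding mpoly_fun_def by metis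
qed

lemma mpoly_fun_add:
  assumes "mpoly_fun d F" "mpoly_fun d G" shows "mpoly_fun d (\<lambda>z. F z + G z)"
proof -
  obtain b1 b2 where "mpoly d b1" "mpoly d b2" "\<And>z. F z = mpeval d b1 z" "\<And>z. G z = mpeval d b2 z"
    using assms unfolding mpoly_fun_def by blast
  then show ?thesis unfolding mpoly_fun_def
    by (intro exI[of _ "\<lambda>\<alpha>. b1 \<alpha> + b2 \<alpha>"]) (simp add: mpoly_add mpeval_add mpoly_finite_support)
qed

lemma mpoly_fun_scale:
  assumes "mpoly_fun d F" shows "mpoly_fun d (\<lambda>z. k * F z)"
proof -
  obtain b where "mpoly d b" "\<And>z. F z = mpeval d b z"
    using assms unfolding mpoly_fun_def by blast
  then show ?thesis unfolding mpoly_fun_def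
    by (intro exI[of _ "\<lambda>\<alpha>. k * b \<alpha>"]) (simp add: mpoly_scale mpeval_scale)
qed

lemma mpoly_fun_sum:
  assumes "finite S" "\<And>s. s \<in> S \<Longrightarrow> mpoly_fun d (F s)" shows "mpoly_fun d (\<lambda>z. \<Sum>s\<in>S. F s z)"
  using assms
proof (induction S rule: finite_induct)
  case empty
  show ?case using mpoly_fun_const[of d 0] by simp
next
  case (insert s S)
  then show ?case by (simp add: mpoly_fun_add)
qed

lemma mmon_incr_exponent:
  assumes "j < d"
  shows "mmon d (\<alpha>(j := Suc (\<alpha> j))) z = z j * mmon d \<alpha> z"
proof -
  have "mmon d (\<alpha>(j := Suc (\<alpha> j))) z = z j ^ Suc (\<alpha> j) * (\<Prod>i\<in>{..<d} - {j}. z i ^ \<alpha> i)"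
    unfolding mmon_def using assms by (subst prod.remove[of _ j]) auto
  also have "\<dots> = z j * mmon d \<alpha> z"
    unfolding mmon_def using assms by (subst (2) prod.remove[of _ j]) auto
  finally show ?thesis .
qed

lemma mpoly_fun_coord_mult:
  assumes "mpoly_fun d F" "j < d" shows "mpoly_fun d (\<lambda>z. z j * F z)"
proof -
  obtain b where b: "mpoly d b" "\<And>z. F z = mpeval d b z"
    using assms unfolding mpoly_fun_def by blast
  define S where "S = {\<alpha>. b \<alpha> \<noteq> 0}"
  define sh where "sh = (\<lambda>\<alpha>::nat\<Rightarrow>nat. \<alpha>(j := Suc (\<alpha> j)))"
  define b' where "b' = (\<lambda>\<beta>. if 0 < \<beta> j then b (\<beta>(j := \<beta> j - 1)) else 0)"
  have inj: "inj sh" unfolding sh_def inj_def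
    by (metis Suc_inject fun_upd_apply fun_upd_idem_iff fun_upd_upd)
  have b'_sh: "b' (sh \<alpha>) = b \<alpha>" for \<alpha> unfolding b'_def sh_def by auto
  have supp: "{\<beta>. b' \<beta> \<noteq> 0} = sh ` S"
  proof safe
    fix \<beta> assume "b' \<beta> \<noteq> 0"
    then have "0 < \<beta> j" "b (\<beta>(j := \<beta> j - 1)) \<noteq> 0" unfolding b'_def by (auto split: if_splits)
    then show "\<beta> \<in> sh ` S" unfolding S_def sh_def
      by (intro image_eqI[of _ _ "\<beta>(j := \<beta> j - 1)"]) auto
  qed (auto simp: b'_sh S_def)
  have "mpoly d b'" unfolding mpoly_def
  proof (intro conjI allI impI)
    show "finite {\<beta>. b' \<beta> \<noteq> 0}" unfolding supp S_def using mpoly_finite_support[OF b(1)] by simp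
    fix \<beta> i assume "b' \<beta> \<noteq> 0" "d \<le> i"
    then obtain \<alpha> where "b \<alpha> \<noteq> 0" "\<beta> = sh \<alpha>" using supp S_def by auto
    then show "\<beta> i = 0" using b(1) assms(2) \<open>d \<le> i\<close> unfolding mpoly_def sh_def by auto
  qed
  moreover have "z j * F z = mpeval d b' z" for z
  proof -
    have "mpeval d b' z = (\<Sum>\<beta>\<in>sh ` S. b' \<beta> * mmon d \<beta> z)"
      unfolding mpeval_mmon supp ..
    also have "\<dots> = (\<Sum>\<alpha>\<in>S. b' (sh \<alpha>) * mmon d (sh \<alpha>) z)"
      using inj by (simp add: sum.reindex inj_on_subset)
    also have "\<dots> = (\<Sum>\<alpha>\<in>S. b \<alpha> * (z j * mmon d \<alpha> z))"
      by (simp only: b'_sh) (simp add: sh_def mmon_incr_exponent[OF assms(2)])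
    also have "\<dots> = z j * F z"
      unfolding b(2) mpeval_mmon S_def by (simp add: sum_distrib_left algebra_simps)
    finally show ?thesis by simp
  qed
  ultimately show ?thesis unfolding mpoly_fun_def by blast
qed

lemma mpoly_fun_prod_translate:
  assumes "k \<le> d" shows "mpoly_fun d (\<lambda>z. \<Prod>i<k. (u i - z i) ^ \<alpha> i)"
  using assms
proof (induction k)
  case 0
  show ?case using mpoly_fun_const[of d 1] by simp
next
  case (Suc k)
  have "mpoly_fun d (\<lambda>z. (\<Prod>i<k. (u i - z i) ^ \<alpha> i) * (u k - z k) ^ n)" for n
  proof (induction n)
    case 0
    then show ?case using Suc by simp
  next
    case (Suc n)
    have "mpoly_fun d (\<lambda>z. u k * G z + (-1) * (z k * G z))" if "mpoly_fun d G" for G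
      using that \<open>Suc k \<le> d\<close> by (intro mpoly_fun_add mpoly_fun_scale mpoly_fun_coord_mult) auto
    from this[OF Suc.IH] show ?case by (simp add: algebra_simps)
  qed
  then show ?case by simp
qed

lemma mpoly_fun_translate:
  assumes "mpoly d q"
  shows "mpoly_fun d (\<lambda>\<zeta>. mpeval d q (\<lambda>i. u i - \<zeta> i))"
  unfolding mpeval_def
proof (rule mpoly_fun_sum[OF mpoly_finite_support[OF assms]])
  fix \<alpha>
  show "mpoly_fun d (\<lambda>\<zeta>. q \<alpha> * (\<Prod>i<d. (u i - \<zeta> i) ^ \<alpha> i))"
    by (rule mpoly_fun_scale[OF mpoly_fun_prod_translate]) simp
qed

definition homogeneous_part :: "nat \<Rightarrow> nat \<Rightarrow> ((nat \<Rightarrow> nat) \<Rightarrow> complex) \<Rightarrow> (nat \<Rightarrow> nat) \<Rightarrow> complex" where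
  "homogeneous_part d k b = (\<lambda>\<alpha>. if mdeg d \<alpha> = k then b \<alpha> else 0)"

definition coeff_bound :: "nat \<Rightarrow> ((nat \<Rightarrow> nat) \<Rightarrow> complex) \<Rightarrow> real \<Rightarrow> real" where
  "coeff_bound d b K = (\<Sum>\<alpha>\<in>{\<alpha>. b \<alpha> \<noteq> 0}. cmod (b \<alpha>) * K ^ mdeg d \<alpha>)"

lemma mpoly_homogeneous_part:
  assumes "mpoly d b" shows "mpoly d (homogeneous_part d k b)"
  unfolding mpoly_def
proof (intro conjI allI impI)
  show "finite {\<alpha>. homogeneous_part d k b \<alpha> \<noteq> 0}"
    by (rule finite_subset[OF _ mpoly_finite_support[OF assms]]) (auto simp: homogeneous_part_def)
  fix \<alpha> i assume "homogeneous_part d k b \<alpha> \<noteq> 0" "d \<le> i"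
  then show "\<alpha> i = 0" using assms unfolding mpoly_def homogeneous_part_def by (simp split: if_splits)
qed

lemma coeff_bound_nonneg: "0 \<le> K \<Longrightarrow> 0 \<le> coeff_bound d b K"
  unfolding coeff_bound_def by (intro sum_nonneg) auto

lemma mmon_scale: "mmon d \<alpha> (\<lambda>i. t * w i) = t ^ mdeg d \<alpha> * mmon d \<alpha> w"
  unfolding mmon_def mdeg_def by (simp add: power_mult_distrib prod.distrib power_sum)

lemma norm_mmon_le:
  assumes "\<And>i. i < d \<Longrightarrow> cmod (w i) \<le> K"
  shows "cmod (mmon d \<alpha> w) \<le> K ^ mdeg d \<alpha>"
proof -
  have "cmod (mmon d \<alpha> w) = (\<Prod>i<d. cmod (w i) ^ \<alpha> i)"
    unfolding mmon_def by (simp add: prod_norm[symmetric] norm_power)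
  also have "\<dots> \<le> (\<Prod>i<d. K ^ \<alpha> i)"
    by (intro prod_mono conjI power_mono assms) auto
  also have "\<dots> = K ^ mdeg d \<alpha>" unfolding mdeg_def by (simp add: power_sum)
  finally show ?thesis .
qed

lemma mpeval_homogeneous_part_scale:
  "mpeval d (homogeneous_part d k b) (\<lambda>i. t * w i) = t ^ k * mpeval d (homogeneous_part d k b) w"
  unfolding mpeval_mmon mmon_scale sum_distrib_left
  by (rule sum.cong) (auto simp: homogeneous_part_def split: if_splits)

lemma norm_mpeval_scale_le:
  assumes "finite {\<alpha>. b \<alpha> \<noteq> 0}" and van: "\<forall>\<beta>. mdeg d \<beta> < k \<longrightarrow> b \<beta> = 0"
    and t: "cmod t \<le> 1" and w: "\<And>i. i < d \<Longrightarrow> cmod (w i) \<le> K"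
  shows "cmod (mpeval d b (\<lambda>i. t * w i)) \<le> cmod t ^ k * coeff_bound d b K"
proof -
  have "cmod (mpeval d b (\<lambda>i. t * w i))
      \<le> (\<Sum>\<alpha>\<in>{\<alpha>. b \<alpha> \<noteq> 0}. cmod (b \<alpha> * (t ^ mdeg d \<alpha> * mmon d \<alpha> w)))"
    unfolding mpeval_mmon mmon_scale by (rule norm_sum)
  also have "\<dots> \<le> (\<Sum>\<alpha>\<in>{\<alpha>. b \<alpha> \<noteq> 0}. cmod t ^ k * (cmod (b \<alpha>) * K ^ mdeg d \<alpha>))"
  proof (rule sum_mono)
    fix \<alpha> assume "\<alpha> \<in> {\<alpha>. b \<alpha> \<noteq> 0}"
    then have "k \<le> mdeg d \<alpha>" using van not_le by auto
    then have tk: "cmod t ^ mdeg d \<alpha> \<le> cmod t ^ k"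
      by (rule power_decreasing) (use t in auto)
    have "cmod (b \<alpha> * (t ^ mdeg d \<alpha> * mmon d \<alpha> w))
        = cmod (b \<alpha>) * (cmod t ^ mdeg d \<alpha> * cmod (mmon d \<alpha> w))"
      by (simp add: norm_mult norm_power)
    also have "\<dots> \<le> cmod (b \<alpha>) * (cmod t ^ k * K ^ mdeg d \<alpha>)"
      by (intro mult_left_mono mult_mono tk norm_mmon_le[OF w]) auto
    finally show "cmod (b \<alpha> * (t ^ mdeg d \<alpha> * mmon d \<alpha> w)) \<le> cmod t ^ k * (cmod (b \<alpha>) * K ^ mdeg d \<alpha>)"
      by (simp add: mult_ac)
  qed
  also have "\<dots> = cmod t ^ k * coeff_bound d b K"
    unfolding coeff_bound_def by (simp add: sum_distrib_left)
  finally show ?thesis .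
qed

lemma norm_mpeval_scale_minus_homogeneous_part_le:
  assumes b: "finite {\<alpha>. b \<alpha> \<noteq> 0}" and van: "\<forall>\<beta>. mdeg d \<beta> < M \<longrightarrow> b \<beta> = 0"
    and t: "cmod t \<le> 1" and w: "\<And>i. i < d \<Longrightarrow> cmod (w i) \<le> K" and K: "0 \<le> K"
  shows "cmod (mpeval d b (\<lambda>i. t * w i) - t ^ M * mpeval d (homogeneous_part d M b) w)
    \<le> cmod t ^ (M + 1) * coeff_bound d b K"
proof -
  define r where "r = (\<lambda>\<alpha>. if mdeg d \<alpha> = M then 0 else b \<alpha>)"
  have supp_r: "{\<alpha>. r \<alpha> \<noteq> 0} \<subseteq> {\<alpha>. b \<alpha> \<noteq> 0}" by (auto simp: r_def)
  have fin_r: "finite {\<alpha>. r \<alpha> \<noteq> 0}" by (rule finite_subset[OF supp_r b])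
  have fin_h: "finite {\<alpha>. homogeneous_part d M b \<alpha> \<noteq> 0}"
    by (rule finite_subset[OF _ b]) (auto simp: homogeneous_part_def)
  have "b = (\<lambda>\<alpha>. homogeneous_part d M b \<alpha> + r \<alpha>)"
    by (auto simp: homogeneous_part_def r_def)
  then have "mpeval d b (\<lambda>i. t * w i) - t ^ M * mpeval d (homogeneous_part d M b) w
      = mpeval d r (\<lambda>i. t * w i)"
    using mpeval_add[OF fin_h fin_r] by (metis add_diff_cancel_left' mpeval_homogeneous_part_scale)
  also have "cmod \<dots> \<le> cmod t ^ (M + 1) * coeff_bound d r K"
    using van by (intro norm_mpeval_scale_le fin_r t w) (auto simp: r_def)
  also have "\<dots> \<le> cmod t ^ (M + 1) * coeff_bound d b K"
  proof (rule mult_left_mono)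
    have "coeff_bound d r K = (\<Sum>\<alpha>\<in>{\<alpha>. r \<alpha> \<noteq> 0}. cmod (b \<alpha>) * K ^ mdeg d \<alpha>)"
      unfolding coeff_bound_def by (rule sum.cong) (auto simp: r_def)
    also have "\<dots> \<le> coeff_bound d b K"
      unfolding coeff_bound_def using K by (intro sum_mono2[OF b supp_r]) auto
    finally show "coeff_bound d r K \<le> coeff_bound d b K" .
  qed simp
  finally show ?thesis .
qed

lemma norm_mpeval_real_scale_approx:
  assumes "finite {\<alpha>. b \<alpha> \<noteq> 0}" "\<forall>\<beta>. mdeg d \<beta> < M \<longrightarrow> b \<beta> = 0"
    and t: "0 < t" "t \<le> 1" and "\<And>i. i < d \<Longrightarrow> cmod (w i) \<le> K" "0 \<le> K"
  shows "\<bar>cmod (mpeval d b (\<lambda>i. of_real t * w i)) - t ^ M * cmod (mpeval d (homogeneous_part d M b) w)\<bar>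
    \<le> t ^ (M + 1) * coeff_bound d b K"
proof -
  let ?A = "mpeval d b (\<lambda>i. of_real t * w i)"
  let ?H = "of_real t ^ M * mpeval d (homogeneous_part d M b) w"
  have "t ^ M * cmod (mpeval d (homogeneous_part d M b) w) = cmod ?H"
    using t by (simp add: norm_mult norm_power)
  moreover have "\<bar>cmod ?A - cmod ?H\<bar> \<le> cmod (?A - ?H)"
    by (rule norm_triangle_ineq3)
  moreover have "cmod (?A - ?H) \<le> t ^ (M + 1) * coeff_bound d b K"
    using norm_mpeval_scale_minus_homogeneous_part_le[OF assms(1,2), of "of_real t" w K] assms(3-6)
    by simp
  ultimately show ?thesis by linarith
qed

lemma sum_digits_less:
  fixes N :: nat
  assumes "\<forall>i<n. a i < N"
  shows "(\<Sum>i<n. a i * N ^ i) < N ^ n"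
  using assms
proof (induction n)
  case (Suc n)
  then have "(\<Sum>i<Suc n. a i * N ^ i) < (a n + 1) * N ^ n" by simp
  also have "\<dots> \<le> N * N ^ n" using Suc.prems by (intro mult_right_mono) auto
  finally show ?case by simp
qed simp

lemma sum_digits_inj:
  fixes N :: nat
  assumes "\<forall>i<n. a i < N" "\<forall>i<n. b i < N" "(\<Sum>i<n. a i * N ^ i) = (\<Sum>i<n. b i * N ^ i)"
  shows "\<forall>i<n. a i = b i"
  using assms
proof (induction n)
  case (Suc n)
  define sa where "sa = (\<Sum>i<n. a i * N ^ i)"
  define sb where "sb = (\<Sum>i<n. b i * N ^ i)"
  have "sa < N ^ n" "sb < N ^ n"
    using Suc.prems(1,2) unfolding sa_def sb_def by (simp_all add: sum_digits_less)
  then have pos: "N ^ n \<noteq> 0" by linarith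
  have eq: "sa + a n * N ^ n = sb + b n * N ^ n"
    using Suc.prems(3) by (simp add: sa_def sb_def)
  have "a n = (sa + a n * N ^ n) div N ^ n" "b n = (sb + b n * N ^ n) div N ^ n"
    using pos \<open>sa < N ^ n\<close> \<open>sb < N ^ n\<close> by simp_all
  then have "a n = b n" using eq by simp
  moreover have "\<forall>i<n. a i = b i"
  proof (rule Suc.IH)
    show "\<forall>i<n. a i < N" "\<forall>i<n. b i < N" using Suc.prems(1,2) by simp_all
    show "(\<Sum>i<n. a i * N ^ i) = (\<Sum>i<n. b i * N ^ i)"
      using eq \<open>a n = b n\<close> unfolding sa_def sb_def by simp
  qed
  ultimately show ?case by (simp add: less_Suc_eq)
qed simp

lemma mpoly_nonzero_at_RHP_point:
  assumes c: "mpoly d c" and "c \<alpha>0 \<noteq> 0"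
  shows "\<exists>w. (\<forall>i<d. 0 < Re (w i)) \<and> mpeval d c w \<noteq> 0"
proof -
  define S where "S = {\<alpha>. c \<alpha> \<noteq> 0}"
  have fin: "finite S" and \<alpha>0: "\<alpha>0 \<in> S"
    using assms mpoly_finite_support by (auto simp: S_def)
  obtain N where "(\<lambda>(\<alpha>, i). \<alpha> i) ` (S \<times> {..<d}) \<subseteq> {..<N}"
    using finite_nat_bounded[of "(\<lambda>(\<alpha>, i). \<alpha> i) ` (S \<times> {..<d})"] fin by blast
  then have N: "\<forall>i<d. \<alpha> i < N" if "\<alpha> \<in> S" for \<alpha> using that by blast
  \<comment> \<open>Substituting \<open>z i = y ^ N ^ i\<close> turns \<open>mmon d \<alpha>\<close> into \<open>y ^ E \<alpha>\<close>; \<open>E\<close> is injective on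
    the support since the exponents \<open>\<alpha> i < N\<close> are the base-\<open>N\<close> digits of \<open>E \<alpha>\<close>.\<close>
  define E where "E = (\<lambda>\<alpha>. \<Sum>i<d. \<alpha> i * N ^ i)"
  have E_inj: "inj_on E S"
  proof (rule inj_onI)
    fix \<alpha> \<beta> assume "\<alpha> \<in> S" "\<beta> \<in> S" "E \<alpha> = E \<beta>"
    then have "\<forall>i<d. \<alpha> i = \<beta> i"
      using N unfolding E_def by (intro sum_digits_inj) simp_all
    moreover have "\<forall>i\<ge>d. \<alpha> i = 0 \<and> \<beta> i = 0"
      using c \<open>\<alpha> \<in> S\<close> \<open>\<beta> \<in> S\<close> unfolding mpoly_def S_def by auto
    ultimately show "\<alpha> = \<beta>" by (metis ext not_le)
  qed
  define P where "P = (\<Sum>\<alpha>\<in>S. monom (c \<alpha>) (E \<alpha>))"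
  have eval_P: "mpeval d c (\<lambda>i. y ^ N ^ i) = poly P y" for y
  proof -
    have "mmon d \<alpha> (\<lambda>i. y ^ N ^ i) = y ^ E \<alpha>" for \<alpha>
      unfolding mmon_def E_def by (simp add: power_mult[symmetric] power_sum mult.commute)
    then show ?thesis unfolding mpeval_mmon S_def[symmetric] P_def by (simp add: poly_sum poly_monom)
  qed
  have "coeff P (E \<alpha>0) = (\<Sum>\<alpha>\<in>S. if \<alpha> = \<alpha>0 then c \<alpha> else 0)"
    unfolding P_def coeff_sum coeff_monom
    using E_inj \<alpha>0 by (intro sum.cong) (auto simp: inj_on_def)
  then have "coeff P (E \<alpha>0) \<noteq> 0" using fin \<alpha>0 assms(2) by simp
  then have "finite {y. poly P y = 0}" by (intro poly_roots_finite) auto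
  then have "finite (of_real -` {y. poly P y = 0} :: real set)"
    by (rule finite_vimageI) (simp add: inj_on_def)
  then have "infinite ({0<..} - of_real -` {y. poly P y = 0} :: real set)"
    by (rule Diff_infinite_finite[OF _ infinite_Ioi])
  then obtain x :: real where x: "x \<in> {0<..} - of_real -` {y. poly P y = 0}"
    using infinite_imp_nonempty by blast
  then have "\<forall>i<d. 0 < Re (of_real x ^ N ^ i)" by (simp flip: of_real_power)
  moreover have "mpeval d c (\<lambda>i. of_real x ^ N ^ i) \<noteq> 0"
    using x unfolding eval_P by simp
  ultimately show ?thesis by (intro exI[of _ "\<lambda>i. of_real x ^ N ^ i"] conjI)
qed

lemma cmod_one_minus_mult_lt_1:
  fixes t a A :: real and z :: complex
  assumes "0 < t" "0 < a" "a \<le> Re z" "cmod z \<le> A" "t * A\<^sup>2 \<le> a"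
  shows "cmod (1 - of_real t * z) < 1"
proof -
  have "(cmod (1 - of_real t * z))\<^sup>2 = (1 - t * Re z)\<^sup>2 + (t * Im z)\<^sup>2"
    by (simp add: cmod_power2)
  also have "\<dots> = 1 - 2 * t * Re z + t\<^sup>2 * (cmod z)\<^sup>2"
    by (simp only: cmod_power2[of z]) (simp add: power2_eq_square algebra_simps)
  finally have sq: "(cmod (1 - of_real t * z))\<^sup>2 = 1 - 2 * t * Re z + t\<^sup>2 * (cmod z)\<^sup>2" .
  have "t\<^sup>2 * (cmod z)\<^sup>2 \<le> t\<^sup>2 * A\<^sup>2"
    using assms by (intro mult_left_mono power_mono) auto
  also have "\<dots> \<le> t * a" using mult_left_mono[OF assms(5), of t] assms(1)
    by (simp add: power2_eq_square mult.assoc)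
  finally have "t\<^sup>2 * (cmod z)\<^sup>2 \<le> t * a" .
  moreover have "t * a \<le> t * Re z" using assms by simp
  ultimately have "(cmod (1 - of_real t * z))\<^sup>2 < 1"
    using sq mult_pos_pos[OF assms(1,2)] by linarith
  then show ?thesis by (simp add: abs_square_less_1)
qed

lemma RHP_line_bounds:
  fixes w0 v :: "nat \<Rightarrow> complex"
  assumes "\<forall>i<d. 0 < Re (w0 i)"
  obtains r a A where "0 < r" "0 < a" "0 < A"
    "\<And>s i. cmod s < r \<Longrightarrow> i < d \<Longrightarrow> a \<le> Re (w0 i + s * v i) \<and> cmod (w0 i + s * v i) \<le> A"
proof -
  define a where "a = Min (insert 1 ((\<lambda>i. Re (w0 i) / 2) ` {..<d}))"
  define D where "D = Max (insert 1 ((\<lambda>i. cmod (v i)) ` {..<d}))"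
  define A where "A = Max (insert 0 ((\<lambda>i. cmod (w0 i)) ` {..<d})) + a"
  have a: "0 < a" unfolding a_def using assms by (subst Min_gr_iff) simp_all
  have a_le: "a \<le> Re (w0 i) / 2" if "i < d" for i unfolding a_def using that by (intro Min_le) auto
  have D: "1 \<le> D" unfolding D_def by (intro Max_ge) auto
  have v_le: "cmod (v i) \<le> D" if "i < d" for i unfolding D_def using that by (intro Max_ge) auto
  have w0_le: "cmod (w0 i) + a \<le> A" if "i < d" for i unfolding A_def using that by (simp add: Max_ge)
  show ?thesis
  proof (rule that[of "a / D" a A])
    show "0 < a / D" "0 < a" using a D by simp_all
    have "0 \<le> Max (insert 0 ((\<lambda>i. cmod (w0 i)) ` {..<d}))" by (intro Max_ge) auto
    then show "0 < A" unfolding A_def using a by linarith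
    fix s i assume s: "cmod s < a / D" and i: "i < d"
    have "cmod (s * v i) \<le> a / D * D"
      unfolding norm_mult using s v_le[OF i] D a by (intro mult_mono) auto
    then have sv: "cmod (s * v i) \<le> a" using D by simp
    have "Re (w0 i) - a \<le> Re (w0 i + s * v i)" using abs_Re_le_cmod[of "s * v i"] sv by auto
    moreover have "cmod (w0 i + s * v i) \<le> cmod (w0 i) + a"
      using norm_triangle_ineq[of "w0 i" "s * v i"] sv by linarith
    ultimately show "a \<le> Re (w0 i + s * v i) \<and> cmod (w0 i + s * v i) \<le> A"
      using a_le[OF i] w0_le[OF i] by linarith
  qed
qed

lemma uniform_limit_mpeval_rescaled:
  assumes b: "finite {\<alpha>. b \<alpha> \<noteq> 0}" and van: "\<forall>\<beta>. mdeg d \<beta> < M \<longrightarrow> b \<beta> = 0"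
    and \<tau>: "\<tau> \<longlonglongrightarrow> 0" "\<And>n. 0 < \<tau> n" "\<And>n. \<tau> n \<le> 1"
    and z: "\<And>s i. s \<in> S \<Longrightarrow> i < d \<Longrightarrow> cmod (z s i) \<le> K" and K: "0 \<le> K"
  shows "uniform_limit S (\<lambda>n s. mpeval d b (\<lambda>i. of_real (\<tau> n) * z s i) / of_real (\<tau> n) ^ M)
           (\<lambda>s. mpeval d (homogeneous_part d M b) (z s)) sequentially"
  unfolding uniform_limit_iff
proof (intro allI impI)
  fix e :: real assume e: "0 < e"
  define C where "C = coeff_bound d b K"
  have close: "dist (mpeval d b (\<lambda>i. of_real (\<tau> n) * z s i) / of_real (\<tau> n) ^ M)
      (mpeval d (homogeneous_part d M b) (z s)) \<le> \<tau> n * C" if "s \<in> S" for n s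
  proof -
    let ?t = "of_real (\<tau> n) :: complex"
    let ?X = "mpeval d b (\<lambda>i. ?t * z s i) - ?t ^ M * mpeval d (homogeneous_part d M b) (z s)"
    have "cmod ?X \<le> \<tau> n ^ (M + 1) * C"
      using norm_mpeval_scale_minus_homogeneous_part_le[OF b van, of ?t "z s" K] \<tau>(2,3)[of n] z[OF that] K
      unfolding C_def by simp
    moreover have "mpeval d b (\<lambda>i. ?t * z s i) / ?t ^ M - mpeval d (homogeneous_part d M b) (z s)
        = ?X / ?t ^ M"
      using \<tau>(2)[of n] by (simp add: field_simps)
    ultimately show ?thesis
      using \<tau>(2)[of n] by (simp add: dist_norm norm_divide norm_power divide_le_eq mult_ac)
  qed
  have "((\<lambda>n. \<tau> n * C) \<longlongrightarrow> 0) sequentially"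
    using \<tau>(1) by (rule tendsto_mult_left_zero)
  then have "\<forall>\<^sub>F n in sequentially. \<tau> n * C < e"
    using e by (rule order_tendstoD(2))
  then show "\<forall>\<^sub>F n in sequentially. \<forall>s\<in>S.
      dist (mpeval d b (\<lambda>i. of_real (\<tau> n) * z s i) / of_real (\<tau> n) ^ M)
        (mpeval d (homogeneous_part d M b) (z s)) < e"
    by (rule eventually_mono) (use close in \<open>fastforce intro: le_less_trans\<close>)
qed

lemma entire_limit_of_zero_free_nonzero:
  assumes g: "g holomorphic_on UNIV" "g z1 \<noteq> 0" and r: "0 < r"
    and F: "\<And>n. F n holomorphic_on ball z0 r" "\<And>n s. s \<in> ball z0 r \<Longrightarrow> F n s \<noteq> 0"
    and lim: "uniform_limit (ball z0 r) F g sequentially"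
  shows "g z0 \<noteq> 0"
proof
  assume g0: "g z0 = 0"
  have "g z0 \<noteq> 0"
  proof (rule Hurwitz_no_zeros[of "ball z0 r" F g])
    show "g holomorphic_on ball z0 r" using g(1) by (rule holomorphic_on_subset) simp
    show "uniform_limit K F g sequentially" if "K \<subseteq> ball z0 r" for K
      using lim that by (rule uniform_limit_on_subset)
    show "\<not> g constant_on ball z0 r"
    proof
      assume "g constant_on ball z0 r"
      then have "g constant_on UNIV"
        using r by (intro analytic_continuation'[OF g(1), of "ball z0 r" z0])
          (auto intro: interior_limit_point)
      then have "g z1 = g z0" unfolding constant_on_def by (metis UNIV_I)
      with g(2) g0 show False by simp
    qed
  qed (use r F in auto)
  with g0 show False by simp
qed

lemma homogeneous_part_nonzero_on_RHP:
  assumes b: "mpoly d b" and van: "\<forall>\<beta>. mdeg d \<beta> < M \<longrightarrow> b \<beta> = 0"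
    and \<beta>0: "mdeg d \<beta>0 = M" "b \<beta>0 \<noteq> 0"
    and nz: "\<And>\<zeta>. \<forall>i<d. cmod (1 - \<zeta> i) < 1 \<Longrightarrow> mpeval d b \<zeta> \<noteq> 0"
    and w0: "\<forall>i<d. 0 < Re (w0 i)"
  shows "mpeval d (homogeneous_part d M b) w0 \<noteq> 0"
proof -
  let ?H = "mpeval d (homogeneous_part d M b)"
  have "homogeneous_part d M b \<beta>0 \<noteq> 0" using \<beta>0 by (simp add: homogeneous_part_def)
  then obtain v where v: "?H v \<noteq> 0"
    using mpoly_nonzero_at_RHP_point[OF mpoly_homogeneous_part[OF b]] by blast
  define z where "z = (\<lambda>s i. w0 i + s * (v i - w0 i))"
  obtain r a A where r: "0 < r" and a: "0 < a" and A: "0 < A"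
    and z_bounds: "\<And>s i. cmod s < r \<Longrightarrow> i < d \<Longrightarrow> a \<le> Re (z s i) \<and> cmod (z s i) \<le> A"
    using RHP_line_bounds[OF w0, of "\<lambda>i. v i - w0 i"] unfolding z_def by blast
  define T where "T = min 1 (a / A\<^sup>2)"
  have T: "0 < T" "T \<le> 1" "T * A\<^sup>2 \<le> a"
    using a A by (auto simp: T_def min_def field_simps)
  define \<tau> where "\<tau> = (\<lambda>n. T * (1 / 2) ^ n)"
  have \<tau>: "0 < \<tau> n" "\<tau> n \<le> T" for n
    using T by (auto simp: \<tau>_def mult_le_cancel_left1 power_le_one)
  define F where "F = (\<lambda>n s. mpeval d b (\<lambda>i. of_real (\<tau> n) * z s i) / of_real (\<tau> n) ^ M)"
  have "?H (z 0) \<noteq> 0"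
  proof (rule entire_limit_of_zero_free_nonzero[of "\<lambda>s. ?H (z s)" 1 r F])
    show "(\<lambda>s. ?H (z s)) holomorphic_on UNIV"
      unfolding z_def mpeval_def by (intro holomorphic_intros)
    show "F n holomorphic_on ball 0 r" for n
      unfolding F_def z_def mpeval_def by (intro holomorphic_intros) (use \<tau> in auto)
    show "uniform_limit (ball 0 r) F (\<lambda>s. ?H (z s)) sequentially"
      unfolding F_def
    proof (rule uniform_limit_mpeval_rescaled[OF mpoly_finite_support[OF b] van])
      show "\<tau> \<longlonglongrightarrow> 0"
        unfolding \<tau>_def by (intro tendsto_mult_right_zero LIMSEQ_realpow_zero) auto
      show "0 < \<tau> n" "\<tau> n \<le> 1" for n using \<tau> T by (auto intro: order_trans)
      show "cmod (z s i) \<le> A" if "s \<in> ball 0 r" "i < d" for s i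
        using z_bounds that by auto
    qed (use A in simp)
    show "F n s \<noteq> 0" if "s \<in> ball 0 r" for n s
    proof -
      have "cmod (1 - of_real (\<tau> n) * z s i) < 1" if "i < d" for i
      proof (rule cmod_one_minus_mult_lt_1[OF \<tau>(1) a])
        show "a \<le> Re (z s i)" "cmod (z s i) \<le> A"
          using z_bounds \<open>s \<in> ball 0 r\<close> that by auto
        have "\<tau> n * A\<^sup>2 \<le> T * A\<^sup>2" using \<tau>(2) by (simp add: mult_right_mono)
        then show "\<tau> n * A\<^sup>2 \<le> a" using T(3) by linarith
      qed
      then show ?thesis using nz \<tau>(1)[of n] by (simp add: F_def)
    qed
  qed (use r v in \<open>simp_all add: z_def\<close>)
  then show ?thesis by (simp add: z_def)
qed

lemma continuous_on_coordinate [continuous_intros]: "continuous_on S (\<lambda>x::nat \<Rightarrow> complex. x i)"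
  by (rule continuous_on_subset[OF continuous_on_product_coordinates]) auto

lemma compact_RHP_box:
  fixes c :: real
  shows "compact (PiE UNIV (\<lambda>i. if i < d then {z. cmod z \<le> c \<and> 1 / c \<le> Re z} else {0}))"
proof -
  have "{z. cmod z \<le> c \<and> 1 / c \<le> Re z} = cball 0 c \<inter> {z. 1 / c \<le> Re z}" by auto
  then have "compact {z. cmod z \<le> c \<and> 1 / c \<le> Re z}"
    by (simp add: compact_Int_closed closed_halfspace_Re_ge)
  then have "compactin (product_topology (\<lambda>i. euclidean) UNIV)
      (PiE UNIV (\<lambda>i. if i < d then {z. cmod z \<le> c \<and> 1 / c \<le> Re z} else {0}))"
    unfolding compactin_PiE by auto
  then show ?thesis by (simp add: euclidean_product_topology)
qed

lemma mpeval_bounded_below_on_RHP_box: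
  assumes nz: "\<And>w. \<forall>i<d. 0 < Re (w i) \<Longrightarrow> mpeval d b w \<noteq> 0" and c: "1 \<le> c"
  obtains m where "0 < m" "\<And>w. \<forall>i<d. cmod (w i) \<le> c \<and> 1 / c \<le> Re (w i) \<Longrightarrow> m \<le> cmod (mpeval d b w)"
proof -
  define X where "X = PiE UNIV (\<lambda>i. if i < d then {z. cmod z \<le> c \<and> 1 / c \<le> Re z} else {0})"
  have in_X: "(\<lambda>i. if i < d then w i else 0) \<in> X" if "\<forall>i<d. cmod (w i) \<le> c \<and> 1 / c \<le> Re (w i)" for w
    using that by (simp add: X_def PiE_iff)
  have "X \<noteq> {}" using in_X[of "\<lambda>_. 1"] c by auto
  moreover have "continuous_on X (\<lambda>w. cmod (mpeval d b w))"
    unfolding mpeval_def by (intro continuous_intros)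
  ultimately have "\<exists>w0\<in>X. \<forall>w\<in>X. cmod (mpeval d b w0) \<le> cmod (mpeval d b w)"
    by (intro continuous_attains_inf) (simp_all add: X_def compact_RHP_box)
  then obtain w0 where w0: "w0 \<in> X" and min: "\<And>w. w \<in> X \<Longrightarrow> cmod (mpeval d b w0) \<le> cmod (mpeval d b w)"
    by blast
  have "0 < Re (w0 i)" if "i < d" for i
  proof -
    have "w0 i \<in> (if i < d then {z. cmod z \<le> c \<and> 1 / c \<le> Re z} else {0})"
      using w0 by (simp add: X_def PiE_iff)
    then have "1 / c \<le> Re (w0 i)" using that by simp
    moreover have "0 < 1 / c" using c by simp
    ultimately show ?thesis by linarith
  qed
  then have "mpeval d b w0 \<noteq> 0" by (intro nz) simp
  then have "0 < cmod (mpeval d b w0)" by simp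
  then show ?thesis
  proof (rule that)
    fix w assume "\<forall>i<d. cmod (w i) \<le> c \<and> 1 / c \<le> Re (w i)"
    then have "cmod (mpeval d b w0) \<le> cmod (mpeval d b (\<lambda>i. if i < d then w i else 0))"
      by (intro min in_X)
    also have "\<dots> = cmod (mpeval d b w)"
      using mpeval_cong[of d "\<lambda>i. if i < d then w i else 0" w b] by simp
    finally show "cmod (mpeval d b w0) \<le> cmod (mpeval d b w)" .
  qed
qed

(* The approach regions are written Defs.AR: in HOL-Analysis the bare name AR denotes absolute retracts. *)
lemma AR_normalized:
  assumes "\<zeta> \<in> Defs.AR d c" "0 < d"
  shows "0 < cmod (\<zeta> 0)"
    and "\<And>i. i < d \<Longrightarrow> cmod (\<zeta> i / of_real (cmod (\<zeta> 0))) \<le> c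
      \<and> 1 / c \<le> Re (\<zeta> i / of_real (cmod (\<zeta> 0)))"
proof -
  have ratio: "1 / c \<le> x / y \<and> x / y \<le> c" if "x \<in> Dset d \<zeta>" "y \<in> Dset d \<zeta>" for x y
    using assms(1) that unfolding Defs.AR_def by blast
  have "0 < Re (\<zeta> 0)" using assms unfolding Defs.AR_def by auto
  then show t: "0 < cmod (\<zeta> 0)" using abs_Re_le_cmod[of "\<zeta> 0"] by linarith
  have t_in: "cmod (\<zeta> 0) \<in> Dset d \<zeta>" using assms(2) by (auto simp: Dset_def)
  fix i assume "i < d"
  then have "cmod (\<zeta> i) \<in> Dset d \<zeta>" "Re (\<zeta> i) \<in> Dset d \<zeta>" by (auto simp: Dset_def)
  then show "cmod (\<zeta> i / of_real (cmod (\<zeta> 0))) \<le> c \<and> 1 / c \<le> Re (\<zeta> i / of_real (cmod (\<zeta> 0)))"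
    using ratio t_in t by (simp add: norm_divide Re_divide_of_real)
qed

lemma ray_in_AR:
  assumes w: "\<forall>i<d. 0 < Re (w i)"
  obtains c where "1 < c" "\<And>t. 0 < t \<Longrightarrow> (\<lambda>i. of_real t * w i) \<in> Defs.AR d c"
proof -
  define D where "D = Dset d w"
  have finD: "finite D" by (simp add: D_def Dset_def)
  have posD: "0 < x" if "x \<in> D" for x
    using that w abs_Re_le_cmod by (fastforce simp: D_def Dset_def)
  define c where "c = Max (insert 1 ((\<lambda>(x, y). x / y) ` (D \<times> D))) + 1"
  have ratio: "x / y < c" if "x \<in> D" "y \<in> D" for x y
  proof -
    have "x / y \<le> Max (insert 1 ((\<lambda>(x, y). x / y) ` (D \<times> D)))"
      using finD that by (intro Max_ge) auto
    then show ?thesis unfolding c_def by linarith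
  qed
  have "1 \<le> Max (insert 1 ((\<lambda>(x, y). x / y) ` (D \<times> D)))" using finD by (intro Max_ge) auto
  then have c: "1 < c" unfolding c_def by linarith
  show ?thesis
  proof (rule that[OF c])
    fix t :: real assume t: "0 < t"
    have scaled: "Dset d (\<lambda>i. of_real t * w i) = (\<lambda>x. t * x) ` D"
      using t by (auto simp: D_def Dset_def norm_mult image_Un image_image)
    show "(\<lambda>i. of_real t * w i) \<in> Defs.AR d c" unfolding Defs.AR_def mem_Collect_eq scaled
    proof (intro conjI allI impI ballI)
      show "0 < Re (of_real t * w i)" if "i < d" for i using t w that by simp
      fix x' y' assume "x' \<in> (\<lambda>x. t * x) ` D" "y' \<in> (\<lambda>x. t * x) ` D"
      then obtain x y where xy: "x \<in> D" "y \<in> D" "x' = t * x" "y' = t * y" by blast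
      then have eq: "x' / y' = x / y" using t by simp
      show "x' / y' \<le> c" using ratio[OF xy(1,2)] eq by simp
      have "1 / c \<le> 1 / (y / x)"
        using ratio[OF xy(2,1)] posD[OF xy(1)] posD[OF xy(2)] c by (intro divide_left_mono) auto
      then show "1 / c \<le> x' / y'" using eq by simp
    qed
  qed
qed

definition AR_bounded :: "nat \<Rightarrow> ((nat \<Rightarrow> complex) \<Rightarrow> complex) \<Rightarrow> bool" where
  "AR_bounded d f \<longleftrightarrow> (\<forall>c>1. \<exists>\<delta>>0. \<exists>B. \<forall>\<zeta>\<in>Defs.AR d c. cmod (\<zeta> 0) < \<delta> \<longrightarrow> cmod (f \<zeta>) \<le> B)"

lemma nt_bounded_iff_AR_bounded: "nt_bounded d f u \<longleftrightarrow> AR_bounded d (\<lambda>\<zeta>. f (\<lambda>i. u i - \<zeta> i))"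
  by (simp add: nt_bounded_def AR_bounded_def)

lemma eventually_at_right_0_mult_less:
  fixes X Y :: real
  assumes "0 < Y"
  shows "\<forall>\<^sub>F t in at_right 0. t * X < Y"
proof -
  have "((\<lambda>t. t * X) \<longlongrightarrow> 0) (at_right 0)"
    by (intro tendsto_mult_left_zero tendsto_ident_at)
  then show ?thesis using assms by (rule order_tendstoD(2))
qed

lemma AR_bounded_quotient_if_order_ge:
  assumes "0 < d"
    and bp: "mpoly d bp" "\<forall>\<beta>. mdeg d \<beta> < M \<longrightarrow> bp \<beta> = 0"
    and hom_nz: "\<And>w. \<forall>i<d. 0 < Re (w i) \<Longrightarrow> mpeval d (homogeneous_part d M bp) w \<noteq> 0"
    and bq: "mpoly d bq" "\<forall>\<beta>. mdeg d \<beta> < M \<longrightarrow> bq \<beta> = 0"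
  shows "AR_bounded d (\<lambda>\<zeta>. mpeval d bq \<zeta> / mpeval d bp \<zeta>)"
  unfolding AR_bounded_def
proof (intro allI impI)
  fix c :: real assume c: "1 < c"
  obtain m where m: "0 < m"
    and m_le: "\<And>w. \<forall>i<d. cmod (w i) \<le> c \<and> 1 / c \<le> Re (w i) \<Longrightarrow>
      m \<le> cmod (mpeval d (homogeneous_part d M bp) w)"
    using mpeval_bounded_below_on_RHP_box[OF hom_nz] c by (metis less_imp_le)
  define Cp where "Cp = coeff_bound d bp c"
  define Cq where "Cq = coeff_bound d bq c"
  have Cp: "0 \<le> Cp" and Cq: "0 \<le> Cq" using c by (simp_all add: Cp_def Cq_def coeff_bound_nonneg)
  define \<delta> where "\<delta> = min 1 (m / (2 * Cp + 1))"
  have \<delta>: "0 < \<delta>" using m Cp by (simp add: \<delta>_def)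
  have "cmod (mpeval d bq \<zeta> / mpeval d bp \<zeta>) \<le> 2 * Cq / m"
    if \<zeta>: "\<zeta> \<in> Defs.AR d c" and small: "cmod (\<zeta> 0) < \<delta>" for \<zeta>
  proof -
    define t where "t = cmod (\<zeta> 0)"
    define w where "w = (\<lambda>i. \<zeta> i / of_real t)"
    have t: "0 < t" "t \<le> 1"
      using AR_normalized(1)[OF \<zeta> \<open>0 < d\<close>] small by (auto simp: t_def \<delta>_def)
    have "t * (2 * Cp + 1) < m"
      using small Cp by (simp add: t_def \<delta>_def pos_less_divide_eq)
    then have t_Cp: "t * Cp \<le> m / 2" using t by (simp add: algebra_simps)
    have w: "cmod (w i) \<le> c \<and> 1 / c \<le> Re (w i)" if "i < d" for i
      using AR_normalized(2)[OF \<zeta> \<open>0 < d\<close> that] by (simp add: w_def t_def)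
    have \<zeta>_eq: "mpeval d b \<zeta> = mpeval d b (\<lambda>i. of_real t * w i)" for b
      using t by (intro mpeval_cong) (simp add: w_def)
    have "\<bar>cmod (mpeval d bp \<zeta>) - t ^ M * cmod (mpeval d (homogeneous_part d M bp) w)\<bar>
        \<le> t ^ (M + 1) * Cp"
      unfolding \<zeta>_eq Cp_def using c w t
      by (intro norm_mpeval_real_scale_approx[OF mpoly_finite_support[OF bp(1)] bp(2)]) auto
    moreover have "t ^ M * m \<le> t ^ M * cmod (mpeval d (homogeneous_part d M bp) w)"
      using m_le w t by (simp add: mult_left_mono)
    moreover have "t ^ (M + 1) * Cp \<le> t ^ M * (m / 2)"
      using t_Cp t by (simp add: mult_left_mono mult.assoc)
    ultimately have low: "t ^ M * (m / 2) \<le> cmod (mpeval d bp \<zeta>)" by linarith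
    have up: "cmod (mpeval d bq \<zeta>) \<le> t ^ M * Cq"
      using norm_mpeval_scale_le[OF mpoly_finite_support[OF bq(1)] bq(2), of "of_real t" w c] w t
      unfolding \<zeta>_eq Cq_def by simp
    have "cmod (mpeval d bq \<zeta>) \<le> 2 * Cq / m * (t ^ M * (m / 2))" using up m by (simp add: mult.commute)
    also have "\<dots> \<le> 2 * Cq / m * cmod (mpeval d bp \<zeta>)"
      using low Cq m by (intro mult_left_mono) auto
    finally have "cmod (mpeval d bq \<zeta>) \<le> 2 * Cq / m * cmod (mpeval d bp \<zeta>)" .
    moreover have "0 < cmod (mpeval d bp \<zeta>)" using low t m by (smt (verit) zero_less_power divide_pos_pos mult_pos_pos)
    ultimately show ?thesis by (simp add: norm_divide pos_divide_le_eq)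
  qed
  then show "\<exists>\<delta>>0. \<exists>B. \<forall>\<zeta>\<in>Defs.AR d c. cmod (\<zeta> 0) < \<delta> \<longrightarrow>
      cmod (mpeval d bq \<zeta> / mpeval d bp \<zeta>) \<le> B"
    using \<delta> by blast
qed

lemma quotient_tends_to_infinity_along_ray:
  assumes bp: "finite {\<alpha>. bp \<alpha> \<noteq> 0}" "\<forall>\<beta>. mdeg d \<beta> < M \<longrightarrow> bp \<beta> = 0"
    and bq: "finite {\<alpha>. bq \<alpha> \<noteq> 0}" "\<forall>\<beta>. mdeg d \<beta> < k \<longrightarrow> bq \<beta> = 0" and "k < M"
    and hp: "mpeval d (homogeneous_part d M bp) w \<noteq> 0"
    and hq: "mpeval d (homogeneous_part d k bq) w \<noteq> 0"
  shows "filterlim (\<lambda>t. cmod (mpeval d bq (\<lambda>i. of_real t * w i) / mpeval d bp (\<lambda>i. of_real t * w i)))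
    at_top (at_right 0)"
  unfolding filterlim_at_top
proof
  fix Z :: real
  define K where "K = Max (insert 0 ((\<lambda>i. cmod (w i)) ` {..<d}))"
  have K: "0 \<le> K" "\<And>i. i < d \<Longrightarrow> cmod (w i) \<le> K" unfolding K_def by (auto intro: Max_ge)
  define hv where "hv = cmod (mpeval d (homogeneous_part d M bp) w)"
  define qv where "qv = cmod (mpeval d (homogeneous_part d k bq) w)"
  define Cp where "Cp = coeff_bound d bp K"
  define Cq where "Cq = coeff_bound d bq K"
  have hv: "0 < hv" and qv: "0 < qv" using hp hq by (simp_all add: hv_def qv_def)
  have Cp: "0 \<le> Cp" using K by (simp add: Cp_def coeff_bound_nonneg)
  have "\<forall>\<^sub>F t in at_right 0. t \<in> {0::real<..<1}" by (rule eventually_at_right_real) simp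
  moreover have "\<forall>\<^sub>F t in at_right 0. t * Cq < qv / 2" using qv by (intro eventually_at_right_0_mult_less) simp
  moreover have "\<forall>\<^sub>F t in at_right 0. t * Cp < hv" using hv by (rule eventually_at_right_0_mult_less)
  moreover have "\<forall>\<^sub>F t in at_right 0. t * (\<bar>Z\<bar> * (hv + Cp)) < qv / 2"
    using qv by (intro eventually_at_right_0_mult_less) simp
  ultimately have "\<forall>\<^sub>F t in at_right 0. t \<in> {0<..<1} \<and> t * Cq < qv / 2 \<and> t * Cp < hv
      \<and> t * (\<bar>Z\<bar> * (hv + Cp)) < qv / 2"
    by (intro eventually_conj)
  then show "\<forall>\<^sub>F t in at_right 0. Z \<le> cmod (mpeval d bq (\<lambda>i. of_real t * w i) / mpeval d bp (\<lambda>i. of_real t * w i))"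
  proof (rule eventually_mono)
    fix t :: real
    assume "t \<in> {0<..<1} \<and> t * Cq < qv / 2 \<and> t * Cp < hv \<and> t * (\<bar>Z\<bar> * (hv + Cp)) < qv / 2"
    then have t: "0 < t" "t \<le> 1" and small: "t * Cq < qv / 2" "t * Cp < hv"
      "t * (\<bar>Z\<bar> * (hv + Cp)) < qv / 2" by auto
    let ?p = "cmod (mpeval d bp (\<lambda>i. of_real t * w i))"
    let ?q = "cmod (mpeval d bq (\<lambda>i. of_real t * w i))"
    have approx_p: "\<bar>?p - t ^ M * hv\<bar> \<le> t ^ M * (t * Cp)"
      using norm_mpeval_real_scale_approx[OF bp t, of w K] K unfolding hv_def Cp_def by (simp add: mult_ac)
    have approx_q: "\<bar>?q - t ^ k * qv\<bar> \<le> t ^ k * (t * Cq)"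
      using norm_mpeval_real_scale_approx[OF bq t, of w K] K unfolding qv_def Cq_def by (simp add: mult_ac)
    have "t ^ M * (t * Cp) < t ^ M * hv" using small(2) t by simp
    then have p_pos: "0 < ?p" using approx_p unfolding abs_le_iff by linarith
    have "t ^ k * (t * Cq) \<le> t ^ k * (qv / 2)" using small(1) t by (simp add: mult_left_mono)
    then have q_low: "t ^ k * (qv / 2) \<le> ?q" using approx_q unfolding abs_le_iff by linarith
    have "?p \<le> t ^ M * (hv + t * Cp)" using approx_p unfolding abs_le_iff by (simp add: algebra_simps)
    also have "\<dots> \<le> t ^ M * (hv + Cp)"
      using t Cp by (intro mult_left_mono) (auto simp: mult_left_le_one_le)
    also have "\<dots> \<le> t ^ (k + 1) * (hv + Cp)"
      using t \<open>k < M\<close> hv Cp by (intro mult_right_mono power_decreasing) auto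
    finally have "\<bar>Z\<bar> * ?p \<le> \<bar>Z\<bar> * (t ^ (k + 1) * (hv + Cp))"
      by (simp add: mult_left_mono)
    also have "\<dots> = t ^ k * (t * (\<bar>Z\<bar> * (hv + Cp)))" by (simp add: mult_ac)
    also have "\<dots> \<le> t ^ k * (qv / 2)" using small(3) t by (intro mult_left_mono) auto
    also have "\<dots> \<le> ?q" by (rule q_low)
    finally have "\<bar>Z\<bar> \<le> ?q / ?p" using p_pos by (simp add: pos_le_divide_eq)
    then show "Z \<le> cmod (mpeval d bq (\<lambda>i. of_real t * w i) / mpeval d bp (\<lambda>i. of_real t * w i))"
      by (simp add: norm_divide)
  qed
qed

lemma lowest_degree_coeff:
  assumes "b \<beta>1 \<noteq> 0"
  obtains k \<beta> where "k \<le> mdeg d \<beta>1" "mdeg d \<beta> = k" "b \<beta> \<noteq> 0" "\<forall>\<beta>. mdeg d \<beta> < k \<longrightarrow> b \<beta> = 0"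
proof -
  define k where "k = (LEAST k. \<exists>\<beta>. mdeg d \<beta> = k \<and> b \<beta> \<noteq> 0)"
  have "\<exists>\<beta>. mdeg d \<beta> = k \<and> b \<beta> \<noteq> 0"
    unfolding k_def by (rule LeastI[of _ "mdeg d \<beta>1"]) (use assms in blast)
  then obtain \<beta> where "mdeg d \<beta> = k" "b \<beta> \<noteq> 0" by blast
  moreover have "k \<le> mdeg d \<beta>1" unfolding k_def using assms by (blast intro: Least_le)
  moreover have "\<forall>\<beta>. mdeg d \<beta> < k \<longrightarrow> b \<beta> = 0"
    unfolding k_def using not_less_Least by blast
  ultimately show ?thesis using that by blast
qed

lemma order_ge_if_AR_bounded_quotient:
  assumes bp: "mpoly d bp" "\<forall>\<beta>. mdeg d \<beta> < M \<longrightarrow> bp \<beta> = 0"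
    and hom_nz: "\<And>w. \<forall>i<d. 0 < Re (w i) \<Longrightarrow> mpeval d (homogeneous_part d M bp) w \<noteq> 0"
    and bq: "mpoly d bq"
    and bounded: "AR_bounded d (\<lambda>\<zeta>. mpeval d bq \<zeta> / mpeval d bp \<zeta>)"
  shows "\<forall>\<beta>. mdeg d \<beta> < M \<longrightarrow> bq \<beta> = 0"
proof (rule ccontr)
  assume "\<not> ?thesis"
  then obtain \<beta>1 where \<beta>1: "mdeg d \<beta>1 < M" "bq \<beta>1 \<noteq> 0" by blast
  obtain k \<beta>k where "k \<le> mdeg d \<beta>1" and \<beta>k: "mdeg d \<beta>k = k" "bq \<beta>k \<noteq> 0"
    and van_q: "\<forall>\<beta>. mdeg d \<beta> < k \<longrightarrow> bq \<beta> = 0"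
    using lowest_degree_coeff[of bq \<beta>1 d] \<beta>1(2) by blast
  then have "k < M" using \<beta>1(1) by linarith
  have "homogeneous_part d k bq \<beta>k \<noteq> 0" using \<beta>k by (simp add: homogeneous_part_def)
  then obtain w where w: "\<forall>i<d. 0 < Re (w i)" and hq: "mpeval d (homogeneous_part d k bq) w \<noteq> 0"
    using mpoly_nonzero_at_RHP_point[OF mpoly_homogeneous_part[OF bq]] by blast
  obtain c where c: "1 < c" and ray: "\<And>t. 0 < t \<Longrightarrow> (\<lambda>i. of_real t * w i) \<in> Defs.AR d c"
    using ray_in_AR[OF w] by blast
  obtain \<delta> B where \<delta>: "0 < \<delta>" and B: "\<And>\<zeta>. \<zeta> \<in> Defs.AR d c \<Longrightarrow> cmod (\<zeta> 0) < \<delta> \<Longrightarrow>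
      cmod (mpeval d bq \<zeta> / mpeval d bp \<zeta>) \<le> B"
    using bounded c unfolding AR_bounded_def by blast
  have "\<forall>\<^sub>F t in at_right 0. B + 1 \<le> cmod (mpeval d bq (\<lambda>i. of_real t * w i) / mpeval d bp (\<lambda>i. of_real t * w i))"
    using quotient_tends_to_infinity_along_ray[OF mpoly_finite_support[OF bp(1)] bp(2)
        mpoly_finite_support[OF bq] van_q \<open>k < M\<close> hom_nz[OF w] hq]
    unfolding filterlim_at_top by blast
  moreover have "\<forall>\<^sub>F t in at_right 0. t * cmod (w 0) < \<delta>"
    using \<delta> by (rule eventually_at_right_0_mult_less)
  moreover have "\<forall>\<^sub>F t in at_right 0. 0 < (t::real)" by (simp add: eventually_at_right_less)
  ultimately have "\<forall>\<^sub>F t in at_right 0.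
      B + 1 \<le> cmod (mpeval d bq (\<lambda>i. of_real t * w i) / mpeval d bp (\<lambda>i. of_real t * w i))
      \<and> t * cmod (w 0) < \<delta> \<and> 0 < t"
    by (intro eventually_conj)
  then obtain t where t: "B + 1 \<le> cmod (mpeval d bq (\<lambda>i. of_real t * w i) / mpeval d bp (\<lambda>i. of_real t * w i))"
    "t * cmod (w 0) < \<delta>" "0 < t"
    using eventually_happens'[OF trivial_limit_at_right_real] by blast
  then have "(\<lambda>i. of_real t * w i) \<in> Defs.AR d c" "cmod (of_real t * w 0) < \<delta>"
    using ray by (simp_all add: norm_mult)
  then show False using B t(1) by fastforce
qed

theorem proposition14p2:
  fixes d M :: nat and p q :: "(nat \<Rightarrow> nat) \<Rightarrow> complex"
  assumes "d \<ge> 1"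
    and "mpoly d p" and "mpoly d q"
    and "\<forall>z\<in>polydisc d. mpeval d p z \<noteq> 0"
    and "vanishes_to_order d p (\<lambda>_. 1) M"
  shows "nt_bounded d (\<lambda>z. mpeval d q z / mpeval d p z) (\<lambda>_. 1)
           \<longleftrightarrow> vanishes_to_order_ge d q (\<lambda>_. 1) M"
proof -
  obtain bp \<beta>0 where bp: "mpoly d bp" and shift_p: "\<And>\<zeta>. mpeval d p (\<lambda>i. 1 - \<zeta> i) = mpeval d bp \<zeta>"
    and van_p: "\<forall>\<beta>. mdeg d \<beta> < M \<longrightarrow> bp \<beta> = 0" and \<beta>0: "mdeg d \<beta>0 = M" "bp \<beta>0 \<noteq> 0"
    using assms(5) unfolding vanishes_to_order_def by blast
  have "mpeval d bp \<zeta> \<noteq> 0" if "\<forall>i<d. cmod (1 - \<zeta> i) < 1" for \<zeta>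
    using assms(4) that unfolding polydisc_def shift_p[symmetric] by simp
  then have hom_nz: "\<And>w. \<forall>i<d. 0 < Re (w i) \<Longrightarrow> mpeval d (homogeneous_part d M bp) w \<noteq> 0"
    using homogeneous_part_nonzero_on_RHP[OF bp van_p \<beta>0] by blast
  have nt_iff: "nt_bounded d (\<lambda>z. mpeval d q z / mpeval d p z) (\<lambda>_. 1)
      \<longleftrightarrow> AR_bounded d (\<lambda>\<zeta>. mpeval d bq \<zeta> / mpeval d bp \<zeta>)"
    if "\<And>\<zeta>. mpeval d q (\<lambda>i. 1 - \<zeta> i) = mpeval d bq \<zeta>" for bq
    unfolding nt_bounded_iff_AR_bounded that shift_p ..
  show ?thesis
  proof
    obtain bq where bq: "mpoly d bq" and shift_q: "\<And>\<zeta>. mpeval d q (\<lambda>i. 1 - \<zeta> i) = mpeval d bq \<zeta>"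
      using mpoly_fun_translate[OF assms(3), of "\<lambda>_. 1"] unfolding mpoly_fun_def by blast
    assume "nt_bounded d (\<lambda>z. mpeval d q z / mpeval d p z) (\<lambda>_. 1)"
    then have "\<forall>\<beta>. mdeg d \<beta> < M \<longrightarrow> bq \<beta> = 0"
      using order_ge_if_AR_bounded_quotient[OF bp van_p hom_nz bq] nt_iff[OF shift_q] by blast
    then show "vanishes_to_order_ge d q (\<lambda>_. 1) M"
      unfolding vanishes_to_order_ge_def using bq shift_q by blast
  next
    assume "vanishes_to_order_ge d q (\<lambda>_. 1) M"
    then obtain bq where bq: "mpoly d bq" "\<forall>\<beta>. mdeg d \<beta> < M \<longrightarrow> bq \<beta> = 0"
      and shift_q: "\<And>\<zeta>. mpeval d q (\<lambda>i. 1 - \<zeta> i) = mpeval d bq \<zeta>"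
      unfolding vanishes_to_order_ge_def by blast
    show "nt_bounded d (\<lambda>z. mpeval d q z / mpeval d p z) (\<lambda>_. 1)"
      using AR_bounded_quotient_if_order_ge[OF _ bp van_p hom_nz bq] assms(1) nt_iff[OF shift_q] by simp
  qed
qed

end
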